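(* Let $G$ be a connected graph with $\delta(G)=1$, girth at least $15$, and $G\in\mathcal U$. If $s_1$ and $s_2$ are single star support vertices of $G$, then $d_G(s_1,s_2)\neq 3$.
   Context: All graphs are finite and simple. A set $P\subseteq V(G)$ is an open packing if no two distinct vertices of $P$ have a common neighbor; it is maximal if maximal under inclusion among open packings. $\rho^o(G)$ is the maximum size of an open packing and $\rho^o_L(G)$ the minimum size of a maximal open packing; $\mathcal U$ is the class of graphs with $\rho^o_L(G)=\rho^o(G)$. A leaf is a vertex of degree $1$; a support vertex is a vertex adjacent to at least one leaf; $S_G$ is the set of support vertices. A single star support vertex is a support vertex not adjacent to any other support vertex; a double star support vertex is a support vertex adjacent to another support vertex. *)

theory Defs
  imports Main
begin

definition graph :: "'a set \<Rightarrow> ('a \<Rightarrow> 'a \<Rightarrow> bool) \<Rightarrow> bool" where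
  "graph V E \<longleftrightarrow> finite V \<and> (\<forall>x y. E x y \<longrightarrow> x \<in> V \<and> y \<in> V)
     \<and> (\<forall>x y. E x y \<longrightarrow> E y x) \<and> (\<forall>x. \<not> E x x)"

definition nbhd :: "'a set \<Rightarrow> ('a \<Rightarrow> 'a \<Rightarrow> bool) \<Rightarrow> 'a \<Rightarrow> 'a set" where
  "nbhd V E v = {u \<in> V. E v u}"

definition deg :: "'a set \<Rightarrow> ('a \<Rightarrow> 'a \<Rightarrow> bool) \<Rightarrow> 'a \<Rightarrow> nat" where
  "deg V E v = card (nbhd V E v)"

definition min_degree :: "'a set \<Rightarrow> ('a \<Rightarrow> 'a \<Rightarrow> bool) \<Rightarrow> nat" where
  "min_degree V E = Min (deg V E ` V)"

definition walk :: "'a set \<Rightarrow> ('a \<Rightarrow> 'a \<Rightarrow> bool) \<Rightarrow> 'a list \<Rightarrow> bool" where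
  "walk V E xs \<longleftrightarrow> xs \<noteq> [] \<and> set xs \<subseteq> V \<and> (\<forall>i. Suc i < length xs \<longrightarrow> E (xs ! i) (xs ! Suc i))"

definition connected :: "'a set \<Rightarrow> ('a \<Rightarrow> 'a \<Rightarrow> bool) \<Rightarrow> bool" where
  "connected V E \<longleftrightarrow> V \<noteq> {} \<and>
     (\<forall>u \<in> V. \<forall>v \<in> V. \<exists>xs. walk V E xs \<and> hd xs = u \<and> last xs = v)"

definition dist :: "'a set \<Rightarrow> ('a \<Rightarrow> 'a \<Rightarrow> bool) \<Rightarrow> 'a \<Rightarrow> 'a \<Rightarrow> nat" where
  "dist V E u v = (LEAST n. \<exists>xs. walk V E xs \<and> hd xs = u \<and> last xs = v \<and> length xs = Suc n)"

text \<open>A cycle: at least 3 distinct vertices, consecutive adjacent, last adjacent to first.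
  Its length is the number of vertices (= number of edges).\<close>
definition cycle :: "'a set \<Rightarrow> ('a \<Rightarrow> 'a \<Rightarrow> bool) \<Rightarrow> 'a list \<Rightarrow> bool" where
  "cycle V E xs \<longleftrightarrow> length xs \<ge> 3 \<and> distinct xs \<and> walk V E xs \<and> E (last xs) (hd xs)"

text \<open>Girth at least k (vacuously true for acyclic graphs, girth = infinity).\<close>
definition girth_at_least :: "'a set \<Rightarrow> ('a \<Rightarrow> 'a \<Rightarrow> bool) \<Rightarrow> nat \<Rightarrow> bool" where
  "girth_at_least V E k \<longleftrightarrow> (\<forall>xs. cycle V E xs \<longrightarrow> length xs \<ge> k)"

definition open_packing :: "'a set \<Rightarrow> ('a \<Rightarrow> 'a \<Rightarrow> bool) \<Rightarrow> 'a set \<Rightarrow> bool" where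
  "open_packing V E P \<longleftrightarrow> P \<subseteq> V \<and>
     (\<forall>x \<in> P. \<forall>y \<in> P. x \<noteq> y \<longrightarrow> \<not> (\<exists>w \<in> V. E x w \<and> E y w))"

definition maximal_open_packing :: "'a set \<Rightarrow> ('a \<Rightarrow> 'a \<Rightarrow> bool) \<Rightarrow> 'a set \<Rightarrow> bool" where
  "maximal_open_packing V E P \<longleftrightarrow> open_packing V E P \<and>
     (\<forall>Q. open_packing V E Q \<and> P \<subseteq> Q \<longrightarrow> Q = P)"

definition open_packing_number :: "'a set \<Rightarrow> ('a \<Rightarrow> 'a \<Rightarrow> bool) \<Rightarrow> nat" where
  "open_packing_number V E = Max (card ` {P. open_packing V E P})"

definition lower_open_packing_number :: "'a set \<Rightarrow> ('a \<Rightarrow> 'a \<Rightarrow> bool) \<Rightarrow> nat" where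
  "lower_open_packing_number V E = Min (card ` {P. maximal_open_packing V E P})"

definition class_U :: "'a set \<Rightarrow> ('a \<Rightarrow> 'a \<Rightarrow> bool) \<Rightarrow> bool" where
  "class_U V E \<longleftrightarrow> lower_open_packing_number V E = open_packing_number V E"

definition leaf :: "'a set \<Rightarrow> ('a \<Rightarrow> 'a \<Rightarrow> bool) \<Rightarrow> 'a \<Rightarrow> bool" where
  "leaf V E v \<longleftrightarrow> v \<in> V \<and> deg V E v = 1"

definition support_vertex :: "'a set \<Rightarrow> ('a \<Rightarrow> 'a \<Rightarrow> bool) \<Rightarrow> 'a \<Rightarrow> bool" where
  "support_vertex V E s \<longleftrightarrow> s \<in> V \<and> (\<exists>l \<in> V. E s l \<and> leaf V E l)"

definition single_star_support :: "'a set \<Rightarrow> ('a \<Rightarrow> 'a \<Rightarrow> bool) \<Rightarrow> 'a \<Rightarrow> bool" where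
  "single_star_support V E s \<longleftrightarrow> support_vertex V E s \<and>
     \<not> (\<exists>t \<in> V. E s t \<and> support_vertex V E t)"

end

theory Submission
  imports Defs
begin

text \<open>Root the graph at r = s1, with a leaf l1, and suppose s2, with a leaf l2, is reached by a
  geodesic r, a, b, s2. Girth at least 11 already makes the breadth-first levels around r
  tree-like up to level 5. A graph lies outside U as soon as an open packing S can be exchanged
  for a larger open packing T such that every vertex in conflict with T (equal to it or sharing a
  neighbour with it) is in conflict with S. One such exchange shows that no leaf lies at
  distance 3 from a support vertex; as r is a single star support vertex, every level-2
  vertex v therefore continues to level 4 along v, Y v, X v. Then S = {a, b} \<union> tips and
  T = {l1, r, l2} \<union> tips, where the tips are the X v with v not adjacent to a, is such an
  exchange: a vertex sharing a neighbour other than a with r is one of these v, and it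
  conflicts with its tip.\<close>

lemma successively_iff_nth:
  "successively P xs \<longleftrightarrow> (\<forall>i. Suc i < length xs \<longrightarrow> P (xs ! i) (xs ! Suc i))"
proof (induction xs rule: induct_list012)
  case (3 x y zs)
  then show ?case by (auto simp: nth_Cons split: nat.splits)
qed auto

lemma walk_iff_successively:
  "walk V E xs \<longleftrightarrow> xs \<noteq> [] \<and> set xs \<subseteq> V \<and> successively E xs"
  by (simp add: walk_def successively_iff_nth)

context
  fixes V :: "'a set" and E :: "'a \<Rightarrow> 'a \<Rightarrow> bool"
  assumes graph: "graph V E"
begin

lemma edge_in_V: "E x y \<Longrightarrow> x \<in> V" "E x y \<Longrightarrow> y \<in> V"
  using graph by (auto simp: graph_def)

lemma edge_sym: "E x y \<Longrightarrow> E y x"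
  using graph by (simp add: graph_def)

lemma edge_irrefl: "\<not> E x x"
  using graph by (simp add: graph_def)

lemma leaf_neighbour_unique:
  assumes "leaf V E l" "E l w" "E l w'"
  shows "w = w'"
proof -
  have "card (nbhd V E l) = 1"
    using assms(1) by (simp add: leaf_def deg_def)
  then obtain z where "nbhd V E l = {z}"
    by (rule card_1_singletonE)
  moreover have "w \<in> nbhd V E l" "w' \<in> nbhd V E l"
    using assms(2,3) edge_in_V by (auto simp: nbhd_def)
  ultimately show ?thesis
    by simp
qed

lemma leafI:
  assumes "E v u" "\<And>y. E v y \<Longrightarrow> y = u"
  shows "leaf V E v"
proof -
  have "nbhd V E v = {u}"
    using assms edge_in_V(2) unfolding nbhd_def by blast
  then show ?thesis
    using assms(1) edge_in_V(1) by (simp add: leaf_def deg_def)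
qed

end

definition conflict :: "'a set \<Rightarrow> ('a \<Rightarrow> 'a \<Rightarrow> bool) \<Rightarrow> 'a \<Rightarrow> 'a \<Rightarrow> bool" where
  "conflict V E x y \<longleftrightarrow> x = y \<or> (\<exists>w\<in>V. E x w \<and> E y w)"

lemma conflictI: "graph V E \<Longrightarrow> E x w \<Longrightarrow> E y w \<Longrightarrow> conflict V E x y"
  by (auto simp: conflict_def graph_def)

lemma open_packing_iff_conflict:
  "open_packing V E P \<longleftrightarrow> P \<subseteq> V \<and> (\<forall>x\<in>P. \<forall>y\<in>P. conflict V E x y \<longrightarrow> x = y)"
  by (auto simp: open_packing_def conflict_def)

lemma open_packingI:
  assumes "graph V E" "P \<subseteq> V" "\<And>x y w. x \<in> P \<Longrightarrow> y \<in> P \<Longrightarrow> E x w \<Longrightarrow> E y w \<Longrightarrow> x = y"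
  shows "open_packing V E P"
  using assms by (auto simp: open_packing_def)

lemma conflict_with_leaf:
  assumes "graph V E" "leaf V E l" "E l n" "conflict V E x l"
  shows "E x n"
proof -
  have "E l y \<Longrightarrow> y = n" for y
    using leaf_neighbour_unique[OF assms(1,2)] assms(3) by blast
  then show ?thesis
    using assms(3,4) edge_sym[OF assms(1)] unfolding conflict_def by blast
qed

lemma finite_open_packings: "finite V \<Longrightarrow> finite {P. open_packing V E P}"
  by (rule finite_subset[of _ "Pow V"]) (auto simp: open_packing_def)

lemma open_packing_extends_to_maximal:
  assumes "finite V" "open_packing V E S"
  obtains M where "maximal_open_packing V E M" "S \<subseteq> M"
proof -
  let ?F = "{Q. open_packing V E Q \<and> S \<subseteq> Q}"
  have "finite ?F"
    using finite_open_packings[of V E, OF assms(1)] by (rule rev_finite_subset) blast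
  moreover have "?F \<noteq> {}"
    using assms(2) by blast
  ultimately obtain M where M: "M \<in> ?F" and max: "\<And>Q. Q \<in> ?F \<Longrightarrow> M \<subseteq> Q \<Longrightarrow> M = Q"
    using finite_has_maximal by meson
  have "maximal_open_packing V E M"
    unfolding maximal_open_packing_def using M max by blast
  with M show ?thesis
    using that by blast
qed

lemma lower_open_packing_number_le:
  "finite V \<Longrightarrow> maximal_open_packing V E M \<Longrightarrow> lower_open_packing_number V E \<le> card M"
  unfolding lower_open_packing_number_def maximal_open_packing_def
  by (rule Min_le) (auto intro: finite_imageI rev_finite_subset[OF finite_open_packings])

lemma card_le_open_packing_number:
  "finite V \<Longrightarrow> open_packing V E P \<Longrightarrow> card P \<le> open_packing_number V E"
  unfolding open_packing_number_def
  by (rule Max_ge) (auto intro: finite_imageI finite_open_packings)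

text \<open>The elements of M - S, for a maximal packing M containing S, conflict with nothing in S and
  hence with nothing in T, so T \<union> (M - S) is an open packing larger than M.\<close>
lemma not_class_U_if_exchange:
  assumes finite: "finite V"
    and S: "open_packing V E S" and T: "open_packing V E T" and smaller: "card S < card T"
    and covered: "\<And>t x. t \<in> T \<Longrightarrow> x \<in> V \<Longrightarrow> conflict V E x t \<Longrightarrow> \<exists>s\<in>S. conflict V E x s"
  shows "\<not> class_U V E"
proof
  assume U: "class_U V E"
  obtain M where M: "maximal_open_packing V E M" and "S \<subseteq> M"
    using open_packing_extends_to_maximal[OF finite S] .
  have Mop: "open_packing V E M"
    using M by (simp add: maximal_open_packing_def)
  have no_conflict: "\<not> conflict V E y t" if t: "t \<in> T" and y: "y \<in> M - S" for t y
  proof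
    assume "conflict V E y t"
    moreover have "y \<in> V"
      using Mop y by (auto simp: open_packing_def)
    ultimately obtain s where "s \<in> S" "conflict V E y s"
      using covered t by blast
    then show False
      using Mop \<open>S \<subseteq> M\<close> y by (auto simp: open_packing_iff_conflict)
  qed
  have conflict_sym: "conflict V E x y \<Longrightarrow> conflict V E y x" for x y
    by (auto simp: conflict_def)
  have Q: "open_packing V E (T \<union> (M - S))"
    using T Mop no_conflict conflict_sym unfolding open_packing_iff_conflict
    by (metis Diff_iff Un_iff Un_subset_iff subset_trans Diff_subset)
  have "card (T \<union> (M - S)) \<le> card M"
    using U card_le_open_packing_number[OF finite Q] lower_open_packing_number_le[OF finite M]
    unfolding class_U_def by linarith
  moreover have "T \<inter> (M - S) = {}"
    using no_conflict by (auto simp: conflict_def)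
  moreover have "finite M" "finite T"
    using finite Mop T finite_subset by (auto simp: open_packing_def)
  moreover have "card (M - S) = card M - card S" "card S \<le> card M"
    using \<open>finite M\<close> \<open>S \<subseteq> M\<close> by (simp_all add: card_Diff_subset finite_subset card_mono)
  ultimately show False
    using smaller by (simp add: card_Un_disjoint)
qed

locale rooted_graph =
  fixes V :: "'a set" and E :: "'a \<Rightarrow> 'a \<Rightarrow> bool" and r :: 'a
  assumes graph: "graph V E" and connected: "connected V E" and root_in_V: "r \<in> V"
begin

abbreviation level :: "'a \<Rightarrow> nat" where
  "level \<equiv> dist V E r"

lemmas edge_in_V = edge_in_V[OF graph]
lemmas edge_sym = edge_sym[OF graph]
lemmas edge_irrefl = edge_irrefl[OF graph]

lemma geodesic_exists:
  assumes "x \<in> V"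
  obtains xs where "walk V E xs" "hd xs = r" "last xs = x" "length xs = Suc (level x)"
proof -
  obtain xs where xs: "walk V E xs" "hd xs = r" "last xs = x"
    using connected root_in_V assms unfolding connected_def by blast
  then have "length xs = Suc (length xs - 1)"
    by (cases xs) (auto simp: walk_def)
  with xs have "\<exists>n xs. walk V E xs \<and> hd xs = r \<and> last xs = x \<and> length xs = Suc n"
    by blast
  from LeastI_ex[OF this] show ?thesis
    using that unfolding dist_def by blast
qed

lemma level_le_walk:
  "walk V E xs \<Longrightarrow> hd xs = r \<Longrightarrow> last xs = x \<Longrightarrow> length xs = Suc n \<Longrightarrow> level x \<le> n"
  unfolding dist_def by (rule Least_le) blast

lemma level_root: "level r = 0"
  using level_le_walk[of "[r]"] root_in_V by (simp add: walk_iff_successively)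

lemma level_eq_0_iff:
  assumes "x \<in> V"
  shows "level x = 0 \<longleftrightarrow> x = r"
proof
  assume "level x = 0"
  then obtain xs where "hd xs = r" "last xs = x" "length xs = 1"
    using geodesic_exists[OF assms] by (metis One_nat_def)
  then show "x = r"
    by (metis One_nat_def last_ConsL length_0_conv length_Suc_conv list.sel(1))
qed (simp add: level_root)

lemma level_edge_le: "E x y \<Longrightarrow> level y \<le> Suc (level x)"
proof -
  assume xy: "E x y"
  obtain xs where xs: "walk V E xs" "hd xs = r" "last xs = x" "length xs = Suc (level x)"
    using geodesic_exists edge_in_V(1)[OF xy] by blast
  then have "walk V E (xs @ [y])"
    using xy edge_in_V(2)[OF xy]
    by (auto simp: walk_iff_successively successively_append_iff)
  with xs show ?thesis
    using level_le_walk[of "xs @ [y]"] by (auto simp: walk_def)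
qed

lemma level_neighbour_of_root: "E r u \<Longrightarrow> level u = 1"
  using level_edge_le[of r u] level_eq_0_iff edge_in_V(2) edge_irrefl level_root
  by (metis le_Suc_eq le_zero_eq One_nat_def)

lemma level_le_1_if_edge_to_root: "E x r \<Longrightarrow> level x \<le> 1"
  using level_edge_le[OF edge_sym] level_root by fastforce

lemma level_common_neighbour_le: "E x w \<Longrightarrow> E y w \<Longrightarrow> level y \<le> level x + 2"
  using level_edge_le[of x w] level_edge_le[OF edge_sym, of y w] by simp

lemma parent_exists:
  assumes "x \<in> V" "0 < level x"
  obtains p where "E p x" "Suc (level p) = level x"
proof -
  obtain xs where xs: "walk V E xs" "hd xs = r" "last xs = x" "length xs = Suc (level x)"
    using geodesic_exists[OF assms(1)] .
  then obtain ys where ys: "xs = ys @ [x]" "ys \<noteq> []"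
    using assms(2)
    by (metis append_butlast_last_id length_butlast diff_Suc_1 length_greater_0_conv walk_def)
  have "walk V E ys" "E (last ys) x"
    using xs(1) ys by (auto simp: walk_iff_successively successively_append_iff)
  moreover have "hd ys = r" "length ys = Suc (level x - 1)"
    using xs ys assms(2) by auto
  ultimately have "level (last ys) \<le> level x - 1"
    using level_le_walk by blast
  moreover have "level x \<le> Suc (level (last ys))"
    using level_edge_le[OF \<open>E (last ys) x\<close>] .
  ultimately show ?thesis
    using that \<open>E (last ys) x\<close> assms(2) by fastforce
qed

lemma level_1_neighbour_of_root:
  assumes "u \<in> V" "level u = 1"
  shows "E r u"
proof -
  obtain p where "E p u" "Suc (level p) = level u"
    using parent_exists[OF assms(1)] assms(2) by auto
  moreover have "p = r"
    using calculation level_eq_0_iff edge_in_V(1) assms(2) by simp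
  ultimately show ?thesis
    by simp
qed

end

locale rooted_graph_girth = rooted_graph +
  fixes k :: nat
  assumes girth: "girth_at_least V E k"
begin

text \<open>Prepending and appending the parents of the two ends either closes a cycle or yields
  a path of the same kind one level lower; at level 0 both ends would be the root.\<close>
lemma level_peers_path_long:
  assumes "p1 \<noteq> p2" "level p1 = j" "level p2 = j" "walk V E ys" "distinct ys"
    "hd ys = p1" "last ys = p2" "\<forall>z\<in>set ys. j \<le> level z"
  shows "k < 2 * j + length ys"
  using assms
proof (induction j arbitrary: p1 p2 ys)
  case 0
  then show ?case
    using level_eq_0_iff walk_iff_successively by (metis hd_in_set last_in_set subsetD)
next
  case (Suc j)
  have ends_in_V: "p1 \<in> V" "p2 \<in> V"
    using Suc.prems(4,6,7) by (auto simp: walk_iff_successively)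
  obtain q1 where q1: "E q1 p1" "Suc (level q1) = level p1"
    using parent_exists[OF ends_in_V(1)] Suc.prems(2) by auto
  obtain q2 where q2: "E q2 p2" "Suc (level q2) = level p2"
    using parent_exists[OF ends_in_V(2)] Suc.prems(3) by auto
  have fresh: "q1 \<notin> set ys" "q2 \<notin> set ys"
    using Suc.prems(2,3,8) q1 q2 by force+
  obtain y ys' where ys: "ys = y # ys'" "ys' \<noteq> []"
    using Suc.prems(1,4,6,7) by (cases ys) (auto simp: walk_def split: if_splits)
  have walk_q1: "walk V E (q1 # ys)"
    using Suc.prems(4,6) q1 ys edge_in_V(1) by (auto simp: walk_iff_successively)
  show ?case
  proof (cases "q1 = q2")
    case True
    have "cycle V E (q1 # ys)"
      unfolding cycle_def using ys Suc.prems(5,7) fresh walk_q1 q2 True edge_sym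
      by (auto simp: Suc_le_eq)
    then show ?thesis
      using girth Suc.prems unfolding girth_at_least_def by fastforce
  next
    case False
    have "walk V E ((q1 # ys) @ [q2])"
      using walk_q1 Suc.prems(7) q2 edge_in_V(1) edge_sym \<open>ys = y # ys'\<close>
      unfolding walk_iff_successively successively_append_iff by auto
    moreover have "distinct ((q1 # ys) @ [q2])"
      using fresh False Suc.prems(5) by auto
    moreover have "\<forall>z\<in>set ((q1 # ys) @ [q2]). j \<le> level z"
      using Suc.prems q1 q2 by force
    ultimately have "k < 2 * j + length ((q1 # ys) @ [q2])"
      using Suc.IH[OF False, of "(q1 # ys) @ [q2]"] q1 q2 Suc.prems(2,3) by simp
    then show ?thesis
      by simp
  qed
qed

lemma level_edge_ne:
  assumes "E x y" "2 * level x + 2 \<le> k"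
  shows "level x \<noteq> level y"
proof
  assume "level x = level y"
  moreover have "walk V E [x, y]"
    using assms(1) edge_in_V by (simp add: walk_iff_successively)
  ultimately show False
    using level_peers_path_long[of x y "level x" "[x, y]"] assms edge_irrefl by fastforce
qed

lemma parent_unique:
  assumes "E p x" "E q x" "Suc (level p) = level x" "Suc (level q) = level x"
    and "2 * level x + 1 \<le> k"
  shows "p = q"
proof (rule ccontr)
  assume "p \<noteq> q"
  moreover have "walk V E [p, x, q]"
    using assms(1,2) edge_in_V edge_sym by (simp add: walk_iff_successively)
  ultimately show False
    using level_peers_path_long[of p q "level p" "[p, x, q]"] assms edge_irrefl by auto
qed

lemma level_child:
  assumes "E p x" "Suc (level p) = level x" "E x z" "z \<noteq> p" "2 * level x + 2 \<le> k"
  shows "level z = Suc (level x)"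
proof -
  have "level z \<noteq> level x"
    using level_edge_ne[OF assms(3,5)] by simp
  moreover have "Suc (level z) \<noteq> level x"
    using parent_unique[OF edge_sym[OF assms(3)] assms(1) _ assms(2)] assms(4,5) by force
  ultimately show ?thesis
    using level_edge_le[OF assms(3)] level_edge_le[OF edge_sym[OF assms(3)]] by linarith
qed

lemma leaf_level_ne_3:
  assumes U: "class_U V E" and "support_vertex V E r" and y: "leaf V E y" and girth_6: "6 \<le> k"
  shows "level y \<noteq> 3"
proof
  assume level_y: "level y = 3"
  obtain l1 where rl1: "E r l1" and l1: "leaf V E l1"
    using assms(2) by (auto simp: support_vertex_def)
  obtain v where vy: "E v y" and level_v: "level v = 2"
    using parent_exists[of y] y level_y by (auto simp: leaf_def)
  obtain u where uv: "E u v" and level_u: "level u = 1"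
    using parent_exists[of v] edge_in_V(1)[OF vy] level_v by force
  have ru: "E r u"
    using level_1_neighbour_of_root edge_in_V(1)[OF uv] level_u by blast
  have only_r: "E l1 w \<Longrightarrow> w = r" for w
    using leaf_neighbour_unique[OF graph l1] rl1 edge_sym by blast
  have only_v: "E y w \<Longrightarrow> w = v" for w
    using leaf_neighbour_unique[OF graph y] vy edge_sym by blast
  have S: "open_packing V E {u, v}"
  proof (rule open_packingI[OF graph])
    show "{u, v} \<subseteq> V"
      using edge_in_V uv by blast
    have "level w = 3" if "E v w" "E u w" for w
      using level_child[OF uv _ that(1)] that(2) edge_irrefl level_u level_v girth_6 by force
    then show "x = z" if "x \<in> {u, v}" "z \<in> {u, v}" "E x w" "E z w" for x z w
      using that level_edge_le[of u w] level_u by force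
  qed
  moreover have T: "open_packing V E {l1, v, y}"
  proof (rule open_packingI[OF graph])
    show "{l1, v, y} \<subseteq> V"
      using edge_in_V rl1 vy by blast
    have "\<not> E v r" "\<not> E y r"
      using level_le_1_if_edge_to_root level_v level_y by force+
    then show "x = z" if "x \<in> {l1, v, y}" "z \<in> {l1, v, y}" "E x w" "E z w" for x z w
      using that only_r only_v edge_irrefl by blast
  qed
  moreover have smaller: "card {u, v} < card {l1, v, y}"
  proof -
    have "l1 \<noteq> v" "l1 \<noteq> y" "v \<noteq> y"
      using level_neighbour_of_root[OF rl1] level_v level_y by auto
    then show ?thesis
      by (cases "u = v") auto
  qed
  moreover have covered: "\<exists>s\<in>{u, v}. conflict V E x s"
    if "t \<in> {l1, v, y}" "x \<in> V" "conflict V E x t" for t x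
    using that(1,3) conflict_with_leaf[OF graph l1 edge_sym[OF rl1]]
      conflict_with_leaf[OF graph y edge_sym[OF vy]] conflictI[OF graph] edge_sym ru uv by blast
  ultimately show False
    using not_class_U_if_exchange[OF _ S T smaller covered] U graph by (simp add: graph_def)
qed

lemma level_2_extends_to_level_4:
  assumes U: "class_U V E" and star: "single_star_support V E r" and girth_8: "8 \<le> k"
    and v: "v \<in> V" "level v = 2"
  shows "\<exists>y c. E v y \<and> E y c \<and> level y = 3 \<and> level c = 4"
proof -
  obtain u where uv: "E u v" and level_u: "Suc (level u) = level v"
    using parent_exists[OF v(1)] v(2) by force
  have "\<not> support_vertex V E u"
    using star level_1_neighbour_of_root[of u] edge_in_V(1)[OF uv] level_u v(2)
    by (auto simp: single_star_support_def)
  then have "\<not> leaf V E v"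
    using uv v(1) edge_in_V(1)[OF uv] edge_sym by (auto simp: support_vertex_def)
  then obtain y where vy: "E v y" and yu: "y \<noteq> u"
    using leafI[OF graph edge_sym[OF uv]] by blast
  have level_y: "level y = 3"
    using level_child[OF uv level_u vy yu] v(2) girth_8 by simp
  have "\<not> leaf V E y"
    using leaf_level_ne_3[OF U _ _] star level_y girth_8 by (auto simp: single_star_support_def)
  then obtain c where yc: "E y c" and cv: "c \<noteq> v"
    using leafI[OF graph edge_sym[OF vy]] by blast
  have "level c = 4"
    using level_child[OF vy _ yc cv] v(2) level_y girth_8 by simp
  then show ?thesis
    using vy yc level_y by blast
qed

context
  fixes a b s l1 l2 :: 'a and Y X :: "'a \<Rightarrow> 'a"
  assumes girth_11: "11 \<le> k"
    and ra: "E r a" and ab: "E a b" and bs: "E b s" and level_s: "level s = 3"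
    and l1: "leaf V E l1" "E l1 r" and l2: "leaf V E l2" "E l2 s"
    and extension: "\<And>v. v \<in> V \<Longrightarrow> level v = 2 \<Longrightarrow>
       E v (Y v) \<and> E (Y v) (X v) \<and> level (Y v) = 3 \<and> level (X v) = 4"
begin

definition off_branch :: "'a set" where
  "off_branch = {v \<in> V. level v = 2 \<and> \<not> E a v}"

definition tips :: "'a set" where
  "tips = X ` off_branch"

lemma level_a: "level a = 1"
  using level_neighbour_of_root[OF ra] .

lemma level_b: "level b = 2"
  using level_edge_le[OF ab] level_edge_le[OF bs] level_a level_s by simp

lemma off_branch_extension:
  assumes "v \<in> off_branch"
  shows "E v (Y v)" "E (Y v) (X v)" "level v = 2" "level (Y v) = 3" "level (X v) = 4"
  using assms extension unfolding off_branch_def by auto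

lemma parent_of_Y:
  assumes "v \<in> off_branch" "E q (Y v)" "level q = 2"
  shows "q = v"
  using parent_unique[OF assms(2) off_branch_extension(1)[OF assms(1)]] assms off_branch_extension
    girth_11 by simp

lemma parent_of_X:
  assumes "v \<in> off_branch" "E q (X v)" "level q = 3"
  shows "q = Y v"
  using parent_unique[OF assms(2) off_branch_extension(2)[OF assms(1)]] assms off_branch_extension
    girth_11 by simp

lemma Y_ne_s: "v \<in> off_branch \<Longrightarrow> Y v \<noteq> s"
  using parent_of_Y[of v b] bs level_b ab by (auto simp: off_branch_def)

lemma tips_level: "c \<in> tips \<Longrightarrow> level c = 4"
  using off_branch_extension by (auto simp: tips_def)

lemma tips_common_neighbour:
  assumes "c \<in> tips" "c' \<in> tips" "E c w" "E c' w"
  shows "c = c'"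
proof -
  obtain v v' where v: "v \<in> off_branch" "c = X v" and v': "v' \<in> off_branch" "c' = X v'"
    using assms(1,2) by (auto simp: tips_def)
  have "level c = 4" "level c' = 4"
    using tips_level assms(1,2) by auto
  moreover have "level w \<noteq> 4"
    using level_edge_ne[OF assms(3)] \<open>level c = 4\<close> girth_11 by simp
  ultimately consider "level w = 3" | "level w = 5"
    using level_edge_le[OF assms(3)] level_edge_le[OF edge_sym[OF assms(3)]] by linarith
  then show ?thesis
  proof cases
    case 1
    then have "Y v = Y v'"
      using parent_of_X v v' edge_sym assms(3,4) by metis
    then have "v = v'"
      using parent_of_Y[OF v(1)] off_branch_extension[OF v'(1)] by metis
    then show ?thesis
      using v v' by simp
  next
    case 2
    then show ?thesis
      using parent_unique[OF assms(3,4)] \<open>level c = 4\<close> \<open>level c' = 4\<close> girth_11 by simp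
  qed
qed

lemma tips_subset_V: "tips \<subseteq> V"
  using off_branch_extension(2) edge_in_V(2) by (auto simp: tips_def)

lemma branch_open_packing: "open_packing V E (insert a (insert b tips))"
proof (rule open_packingI[OF graph])
  show "insert a (insert b tips) \<subseteq> V"
    using tips_subset_V edge_in_V ab by blast
  have a_b: "\<not> (E a w \<and> E b w)" for w
  proof
    assume "E a w \<and> E b w"
    then have "level w = 3" "level w \<le> 2"
      using level_child[OF ab _ _] level_edge_le[of a w] edge_irrefl level_a level_b girth_11
      by force+
    then show False
      by simp
  qed
  have a_tip: "\<not> (E a w \<and> E c w)" if "c \<in> tips" for c w
    using level_common_neighbour_le[of a w c] tips_level[OF that] level_a by auto
  have b_tip: "\<not> (E b w \<and> E c w)" if c: "c \<in> tips" for c w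
  proof
    assume bw_cw: "E b w \<and> E c w"
    obtain v where v: "v \<in> off_branch" "c = X v"
      using c by (auto simp: tips_def)
    have "level w = 3"
      using level_edge_le[of b w] level_edge_le[OF edge_sym[of c w]] bw_cw level_b tips_level[OF c]
      by force
    then have "w = Y v"
      using parent_of_X[OF v(1)] bw_cw v(2) edge_sym by blast
    then have "b = v"
      using parent_of_Y[OF v(1)] bw_cw level_b by blast
    then show False
      using v(1) ab by (simp add: off_branch_def)
  qed
  show "x = y"
    if "x \<in> insert a (insert b tips)" "y \<in> insert a (insert b tips)" "E x w" "E y w" for x y w
    using that a_b a_tip b_tip tips_common_neighbour by blast
qed

lemma leaves_open_packing: "open_packing V E (insert l1 (insert r (insert l2 tips)))"
proof (rule open_packingI[OF graph])
  show "insert l1 (insert r (insert l2 tips)) \<subseteq> V"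
    using tips_subset_V edge_in_V l1 l2 root_in_V by blast
  have only_r: "E l1 w \<Longrightarrow> w = r" and only_s: "E l2 w \<Longrightarrow> w = s" for w
    using leaf_neighbour_unique[OF graph] l1 l2 by blast+
  have "r \<noteq> s" "\<not> E r s" "\<not> E r r"
    using level_s level_root level_le_1_if_edge_to_root[OF edge_sym] edge_irrefl by force+
  moreover have "\<not> E c r" "\<not> (E r w \<and> E c w)" if "c \<in> tips" for c w
    using tips_level[OF that] level_le_1_if_edge_to_root level_common_neighbour_le[of r w c]
      level_root by force+
  moreover have "\<not> E c s" if c: "c \<in> tips" for c
  proof
    assume "E c s"
    obtain v where v: "v \<in> off_branch" "c = X v"
      using c by (auto simp: tips_def)
    then show False
      using parent_of_X[OF v(1)] \<open>E c s\<close> edge_sym level_s Y_ne_s by metis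
  qed
  ultimately show "x = y"
    if "x \<in> insert l1 (insert r (insert l2 tips))"
      and "y \<in> insert l1 (insert r (insert l2 tips))" and "E x w" "E y w" for x y w
    using that only_r only_s tips_common_neighbour by blast
qed

lemma card_branch_less_leaves:
  "card (insert a (insert b tips)) < card (insert l1 (insert r (insert l2 tips)))"
proof -
  have finite_tips: "finite tips"
    using tips_subset_V graph finite_subset by (auto simp: graph_def)
  have "l2 \<notin> tips"
  proof
    assume "l2 \<in> tips"
    then obtain v where v: "v \<in> off_branch" "l2 = X v"
      by (auto simp: tips_def)
    then have "Y v = s"
      using leaf_neighbour_unique[OF graph l2(1)] l2(2) off_branch_extension(2) edge_sym by metis
    then show False
      using Y_ne_s[OF v(1)] by simp
  qed
  moreover have "l1 \<notin> tips" "r \<notin> tips"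
    using tips_level level_neighbour_of_root[OF edge_sym[OF l1(2)]] level_root by force+
  moreover have "l1 \<noteq> r" "l1 \<noteq> l2" "r \<noteq> l2"
    using edge_irrefl l1 l2 leaf_neighbour_unique[OF graph l1(1)] level_s level_root
      level_le_1_if_edge_to_root[OF edge_sym] by force+
  ultimately have "card (insert l1 (insert r (insert l2 tips))) = card tips + 3"
    using finite_tips by simp
  moreover have "card (insert a (insert b tips)) \<le> card tips + 2"
    using finite_tips by (simp add: card_insert_if)
  ultimately show ?thesis
    by simp
qed

lemma leaves_covered_by_branch:
  assumes t: "t \<in> insert l1 (insert r (insert l2 tips))" and x: "x \<in> V" and "conflict V E x t"
  shows "\<exists>s\<in>insert a (insert b tips). conflict V E x s"
proof -
  have rooted_at_a: "conflict V E x a" if "E x r"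
    using conflictI[OF graph that edge_sym[OF ra]] .
  have rooted_at_b: "conflict V E x b" if "E x a"
    using conflictI[OF graph that edge_sym[OF ab]] .
  consider "t = l1" | "t = l2" | "t \<in> tips" | "t = r" "x = r" | w where "t = r" "E x w" "E r w"
    using t \<open>conflict V E x t\<close> unfolding conflict_def by blast
  then show ?thesis
  proof cases
    case 1
    then show ?thesis
      using conflict_with_leaf[OF graph l1] \<open>conflict V E x t\<close> rooted_at_a by blast
  next
    case 2
    then show ?thesis
      using conflict_with_leaf[OF graph l2] \<open>conflict V E x t\<close> conflictI[OF graph _ bs] by blast
  next
    case 3
    then show ?thesis
      using \<open>conflict V E x t\<close> by blast
  next
    case 4
    then show ?thesis
      using rooted_at_b ra by blast
  next
    case (5 w)
    show ?thesis
    proof (cases "w = a \<or> x = r")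
      case True
      then show ?thesis
        using 5 rooted_at_b ra by blast
    next
      case False
      have "level w = 1"
        using level_neighbour_of_root[OF 5(3)] .
      then have "level x = 2"
        using level_child[OF 5(3) _ edge_sym[OF 5(2)]] False level_root girth_11 by simp
      moreover have "\<not> E a x"
        using parent_unique[OF _ edge_sym[OF 5(2)]] \<open>level w = 1\<close> \<open>level x = 2\<close> level_a
          False girth_11 by force
      ultimately have "x \<in> off_branch"
        using x by (simp add: off_branch_def)
      then have "conflict V E x (X x)" "X x \<in> tips"
        using conflictI[OF graph off_branch_extension(1) edge_sym[OF off_branch_extension(2)]]
        by (auto simp: tips_def)
      then show ?thesis
        by blast
    qed
  qed
qed

lemma not_class_U_at_level_3_support: "\<not> class_U V E"
  using not_class_U_if_exchange[OF _ branch_open_packing leaves_open_packing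
      card_branch_less_leaves leaves_covered_by_branch] graph by (simp add: graph_def)

end

lemma single_star_support_level_ne_3:
  assumes U: "class_U V E" and star: "single_star_support V E r"
    and s: "support_vertex V E s" and girth_11: "11 \<le> k"
  shows "level s \<noteq> 3"
proof
  assume level_s: "level s = 3"
  obtain xs where xs: "walk V E xs" "hd xs = r" "last xs = s" "length xs = 4"
    using geodesic_exists[of s] s level_s by (auto simp: support_vertex_def)
  then obtain a b where path: "E r a" "E a b" "E b s"
    by (auto simp: walk_iff_successively numeral_eq_Suc length_Suc_conv)
  obtain l1 where l1: "leaf V E l1" "E l1 r"
    using star edge_sym by (auto simp: single_star_support_def support_vertex_def)
  obtain l2 where l2: "leaf V E l2" "E l2 s"
    using s edge_sym by (auto simp: support_vertex_def)
  have "\<forall>v. \<exists>y c. v \<in> V \<and> level v = 2 \<longrightarrow>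
      E v y \<and> E y c \<and> level y = 3 \<and> level c = 4"
    using level_2_extends_to_level_4[OF U star] girth_11 by auto
  then obtain Y X where extension: "\<And>v. v \<in> V \<Longrightarrow> level v = 2 \<Longrightarrow>
      E v (Y v) \<and> E (Y v) (X v) \<and> level (Y v) = 3 \<and> level (X v) = 4"
    by metis
  show False
    using not_class_U_at_level_3_support[OF girth_11 path level_s l1 l2 extension] U by blast
qed

end

theorem claim1:
  fixes V :: "'a set" and E :: "'a \<Rightarrow> 'a \<Rightarrow> bool" and s1 s2 :: 'a
  assumes "graph V E"
    and "connected V E"
    and "min_degree V E = 1"
    and "girth_at_least V E 15"
    and "class_U V E"
    and "single_star_support V E s1"
    and "single_star_support V E s2"
  shows "dist V E s1 s2 \<noteq> 3"
proof -
  interpret rooted_graph_girth V E s1 15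
    using assms(1,2,4,6) by unfold_locales (auto simp: single_star_support_def support_vertex_def)
  show ?thesis
    using single_star_support_level_ne_3[OF assms(5,6)] assms(7)
    by (simp add: single_star_support_def)
qed

end
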